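(* Let $\varphi:\mathbb B\to\mathbb B$ be a slice regular function with $\varphi(0)=0$. Then the operators $C_\varphi f=f^{\odot}\varphi$ and $D_\varphi f=f_{\odot}\varphi$ are bounded on $H^2(\mathbb B)$ and $\|C_\varphi\|=\|D_\varphi\|=1$.
   Context: $\mathbb H$ quaternions, $\mathbb S=\{q:q^2=-1\}$, $\mathbb C_I=\mathbb R+I\mathbb R$, $\mathbb B$ the open unit ball of $\mathbb H$. A function on a domain $\Omega$ is slice regular if on each $\Omega\cap\mathbb C_I$ it is $C^1$ and annihilated by $\frac12(\partial_x+I\partial_y)$; regular functions on $\mathbb B$ are exactly convergent power series $\sum_n q^na_n$. The $\ast$-product of power series is $\big(\sum q^na_n\big)\ast\big(\sum q^nb_n\big)=\sum_n q^n\sum_{k=0}^na_kb_{n-k}$, $\varphi^{\ast0}=1$, $\varphi^{\ast n}=\varphi\ast\varphi^{\ast(n-1)}$. For $f(q)=\sum q^na_n$ regular on $\mathbb B$ and $\varphi:\mathbb B\to\mathbb B$ regular: $f^{\odot}\varphi=\sum_n\varphi^{\ast n}a_n$, $f_{\odot}\varphi=\sum_n a_n\ast\varphi^{\ast n}$. $H^2(\mathbb B)$ is the space of regular $f=\sum q^na_n$ on $\mathbb B$ with $\|f\|_2^2=\sum|a_n|^2<\infty$ (equivalently $\|f\|_2=\sup_{I\in\mathbb S}\lim_{r\to1^-}(\frac1{2\pi}\int_{-\pi}^\pi|f(re^{I\theta})|^2d\theta)^{1/2}$). Operator norm: $\|T\|=\sup\{\|Tf\|_2:\|f\|_2\le1\}$.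 *)

theory Defs
  imports "HOL-Analysis.Analysis"
begin

(* Quaternions H modelled via Cayley-Dickson as pairs (z, w) of complex numbers,
   q = z + w j (z, w in C = R + iR).  The product-type norm is
   sqrt(|z|^2 + |w|^2), i.e. the Euclidean norm of R^4, so topology,
   summability and the open unit ball come from the library. *)
type_synonym quat = "complex \<times> complex"

definition qmul :: "quat \<Rightarrow> quat \<Rightarrow> quat" where
  "qmul p q = (fst p * fst q - snd p * cnj (snd q), fst p * snd q + snd p * cnj (fst q))"

definition qone :: quat where "qone = (1, 0)"

primrec qpow :: "quat \<Rightarrow> nat \<Rightarrow> quat" where
  "qpow q 0 = qone"
| "qpow q (Suc n) = qmul q (qpow q n)"

definition qball :: "quat set" where "qball = ball 0 1"

definition ps :: "(nat \<Rightarrow> quat) \<Rightarrow> quat \<Rightarrow> quat" where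
  "ps a q = (\<Sum>n. qmul (qpow q n) (a n))"

definition ps_rep :: "(quat \<Rightarrow> quat) \<Rightarrow> (nat \<Rightarrow> quat) \<Rightarrow> bool" where
  "ps_rep g a \<longleftrightarrow> (\<forall>q\<in>qball. summable (\<lambda>n. qmul (qpow q n) (a n)) \<and> g q = ps a q)"

(* slice regular functions on B = convergent power series on B *)
definition regular_B :: "(quat \<Rightarrow> quat) \<Rightarrow> bool" where
  "regular_B g \<longleftrightarrow> (\<exists>a. ps_rep g a)"

definition coeffs :: "(quat \<Rightarrow> quat) \<Rightarrow> nat \<Rightarrow> quat" where
  "coeffs g = (SOME a. ps_rep g a)"

definition in_H2 :: "(quat \<Rightarrow> quat) \<Rightarrow> bool" where
  "in_H2 g \<longleftrightarrow> regular_B g \<and> summable (\<lambda>n. (norm (coeffs g n))\<^sup>2)"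

definition H2norm :: "(quat \<Rightarrow> quat) \<Rightarrow> real" where
  "H2norm g = sqrt (\<Sum>n. (norm (coeffs g n))\<^sup>2)"

definition sprod :: "(nat \<Rightarrow> quat) \<Rightarrow> (nat \<Rightarrow> quat) \<Rightarrow> nat \<Rightarrow> quat" where
  "sprod a b n = (\<Sum>k\<le>n. qmul (a k) (b (n - k)))"

primrec spow :: "(nat \<Rightarrow> quat) \<Rightarrow> nat \<Rightarrow> nat \<Rightarrow> quat" where
  "spow b 0 = (\<lambda>m. if m = 0 then qone else 0)"
| "spow b (Suc n) = sprod b (spow b n)"

(* f^odot phi = sum_n phi^{*n} a_n *)
definition Cop :: "(quat \<Rightarrow> quat) \<Rightarrow> (quat \<Rightarrow> quat) \<Rightarrow> quat \<Rightarrow> quat" where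
  "Cop \<phi> f q = (\<Sum>n. qmul (ps (spow (coeffs \<phi>) n) q) (coeffs f n))"

(* f_odot phi = sum_n a_n * phi^{*n} *)
definition Dop :: "(quat \<Rightarrow> quat) \<Rightarrow> (quat \<Rightarrow> quat) \<Rightarrow> quat \<Rightarrow> quat" where
  "Dop \<phi> f q = (\<Sum>n. ps (\<lambda>m. qmul (coeffs f n) (spow (coeffs \<phi>) n m)) q)"

definition bounded_H2 :: "((quat \<Rightarrow> quat) \<Rightarrow> quat \<Rightarrow> quat) \<Rightarrow> bool" where
  "bounded_H2 T \<longleftrightarrow> (\<forall>f. in_H2 f \<longrightarrow> in_H2 (T f)) \<and>
     (\<exists>M. \<forall>f. in_H2 f \<longrightarrow> H2norm (T f) \<le> M * H2norm f)"

definition opnorm_H2 :: "((quat \<Rightarrow> quat) \<Rightarrow> quat \<Rightarrow> quat) \<Rightarrow> real" where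
  "opnorm_H2 T = Sup {H2norm (T f) | f. in_H2 f \<and> H2norm f \<le> 1}"

end

(* Let b be the coefficient sequence of phi.  On a complex slice, right *-multiplication by b is
   a causal convolution whose symbol sends u to u phi(u^-1 z u), hence has norm at most |u|.
   Truncating the symbol to a polynomial and applying the discrete Parseval identity at the roots
   of unity on circles of radius r < 1 shows that such a convolution is a contraction of l^2.
   Left *-multiplication by b is treated in the same way, after passing to the complex 2 x 2
   matrix representation of the quaternions, where its symbol is bounded by duality.
   Since b_0 = 0, the coefficients c of C_phi f satisfy c = a_0 + b * c', where c' belongs to the
   shifted sequence (a (n + 1)), so induction on the number of coefficients gives
   ||C_phi f|| <= ||f||; likewise for D_phi with c' * b.  Both operators fix the constant 1,
   so both norms are exactly 1. *)

theory Submission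
  imports Defs
begin

section \<open>Quaternion arithmetic\<close>

lemma qball_iff: "q \<in> qball \<longleftrightarrow> norm q < 1"
  by (simp add: qball_def)

lemma norm_quat_power2: "(norm (x::quat))\<^sup>2 = (cmod (fst x))\<^sup>2 + (cmod (snd x))\<^sup>2"
  by (cases x) (simp add: norm_Pair)

lemma norm_qmul: "norm (qmul p q) = norm p * norm q"
proof -
  have "(norm (qmul p q))\<^sup>2 = (norm p * norm q)\<^sup>2"
    unfolding power_mult_distrib norm_quat_power2 qmul_def cmod_power2
    by (simp add: power2_eq_square algebra_simps)
  then show ?thesis by (simp add: power2_eq_iff_nonneg)
qed

lemma qmul_assoc: "qmul (qmul p q) r = qmul p (qmul q r)"
  unfolding qmul_def by (simp add: algebra_simps)

lemma qmul_add_left: "qmul (p + q) r = qmul p r + qmul q r"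
  and qmul_add_right: "qmul r (p + q) = qmul r p + qmul r q"
  and qmul_scaleR_left: "qmul (c *\<^sub>R p) q = c *\<^sub>R qmul p q"
  and qmul_scaleR_right: "qmul p (c *\<^sub>R q) = c *\<^sub>R qmul p q"
  unfolding qmul_def by (simp_all add: algebra_simps scaleR_conv_of_real)

lemma qmul_zero_left [simp]: "qmul 0 q = 0"
  and qmul_zero_right [simp]: "qmul q 0 = 0"
  and qmul_one_left [simp]: "qmul qone q = q"
  and qmul_one_right [simp]: "qmul q qone = q"
  unfolding qmul_def qone_def by (simp_all add: zero_prod_def)

lemma norm_qone [simp]: "norm qone = 1"
  by (simp add: qone_def norm_Pair)

lemma qmul_of_real_left: "qmul (complex_of_real t, 0) x = t *\<^sub>R x"
  by (cases x) (simp add: qmul_def scaleR_conv_of_real)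

lemma qpow_of_real: "qpow (complex_of_real t, 0) n = (complex_of_real (t ^ n), 0)"
  by (induct n) (simp_all add: qone_def qmul_def)

lemma norm_qpow: "norm (qpow q n) = norm q ^ n"
  by (induct n) (simp_all add: norm_qmul)

lemma qpow_zero: "0 < n \<Longrightarrow> qpow 0 n = 0"
  by (cases n) simp_all

lemma bounded_linear_qmul_left: "bounded_linear (\<lambda>x. qmul x p)"
  by (rule bounded_linear_intro[where K="norm p"])
     (auto simp: qmul_add_left qmul_scaleR_left norm_qmul)

lemma bounded_linear_qmul_right: "bounded_linear (\<lambda>x. qmul p x)"
  by (rule bounded_linear_intro[where K="norm p"])
     (auto simp: qmul_add_right qmul_scaleR_right norm_qmul mult.commute)

lemma qmul_sum_left: "qmul (\<Sum>i\<in>A. f i) q = (\<Sum>i\<in>A. qmul (f i) q)"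
  by (rule linear_sum[OF bounded_linear.linear[OF bounded_linear_qmul_left]])

lemma qmul_sum_right: "qmul q (\<Sum>i\<in>A. f i) = (\<Sum>i\<in>A. qmul q (f i))"
  by (rule linear_sum[OF bounded_linear.linear[OF bounded_linear_qmul_right]])

definition qconj :: "quat \<Rightarrow> quat" where
  "qconj x = (cnj (fst x), - snd x)"

lemma qmul_qconj_right: "qmul x (qconj x) = (complex_of_real ((norm x)\<^sup>2), 0)"
  unfolding qmul_def qconj_def norm_quat_power2 of_real_add complex_norm_square
  by (simp add: mult.commute)

lemma norm_qconj [simp]: "norm (qconj x) = norm x"
  by (cases x) (simp add: qconj_def norm_Pair)

definition cscale :: "complex \<Rightarrow> quat \<Rightarrow> quat" where
  "cscale c x = qmul (c, 0) x"

lemma cscale_eq: "cscale c x = (c * fst x, c * snd x)"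
  by (simp add: cscale_def qmul_def)

lemma cscale_zero [simp]: "cscale c 0 = 0"
  by (simp add: cscale_def)

lemma cscale_one [simp]: "cscale 1 x = x"
  by (simp add: cscale_eq)

lemma norm_cscale: "norm (cscale c x) = cmod c * norm x"
  by (simp add: cscale_def norm_qmul norm_Pair)

lemma cscale_sum: "cscale c (\<Sum>i\<in>A. f i) = (\<Sum>i\<in>A. cscale c (f i))"
  by (simp add: cscale_def qmul_sum_right)

lemma cscale_cscale: "cscale a (cscale b x) = cscale (a * b) x"
  by (simp add: cscale_eq mult.assoc)

lemma qmul_cscale_left: "qmul (cscale c w) x = cscale c (qmul w x)"
  by (simp add: cscale_def qmul_assoc)

lemma qmul_eq_cscale_conj:
  assumes "w \<noteq> 0"
  obtains q where "norm q = cmod z" and "qmul w q = cscale z w"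
proof
  define q where "q = inverse ((norm w)\<^sup>2) *\<^sub>R qmul (qconj w) (cscale z w)"
  show "norm q = cmod z"
    using assms by (simp add: q_def norm_qmul norm_cscale field_simps power2_eq_square)
  have "qmul w q = inverse ((norm w)\<^sup>2) *\<^sub>R qmul (qmul w (qconj w)) (cscale z w)"
    by (simp add: q_def qmul_scaleR_right qmul_assoc)
  also have "\<dots> = cscale z w"
    unfolding qmul_qconj_right qmul_of_real_left using assms by simp
  finally show "qmul w q = cscale z w" .
qed

text \<open>Under the representation \<open>z + w j \<mapsto> [[z, w], [-cnj w, cnj z]]\<close> by complex matrices,
  \<open>qcol q\<close> is the first column of the matrix of \<open>q\<close> and \<open>qmatvec x\<close> is the matrix of \<open>x\<close>.
  Unlike left multiplication by \<open>x\<close>, \<open>qmatvec x\<close> commutes with \<open>cscale\<close>.\<close>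

definition qcol :: "quat \<Rightarrow> quat" where
  "qcol x = (fst x, - cnj (snd x))"

definition qmatvec :: "quat \<Rightarrow> quat \<Rightarrow> quat" where
  "qmatvec x u = (fst x * fst u + snd x * snd u, - cnj (snd x) * fst u + cnj (fst x) * snd u)"

lemma qcol_qmul: "qcol (qmul x y) = qmatvec x (qcol y)"
  unfolding qcol_def qmul_def qmatvec_def by (simp add: algebra_simps)

lemma norm_qcol [simp]: "norm (qcol x) = norm x"
  unfolding qcol_def by (cases x) (simp add: norm_Pair)

lemma qcol_sum: "qcol (\<Sum>i\<in>A. f i) = (\<Sum>i\<in>A. qcol (f i))"
  by (simp add: qcol_def prod_eq_iff fst_sum snd_sum cnj_sum sum_negf)

lemma norm_qmatvec: "norm (qmatvec x u) = norm x * norm u"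
proof -
  have "(norm (qmatvec x u))\<^sup>2 = (norm x * norm u)\<^sup>2"
    unfolding norm_quat_power2 power_mult_distrib qmatvec_def cmod_power2
    by (simp add: power2_eq_square algebra_simps)
  then show ?thesis by (simp add: power2_eq_iff_nonneg)
qed

lemma qmatvec_add: "qmatvec x (u + v) = qmatvec x u + qmatvec x v"
  and qmatvec_cscale: "qmatvec x (cscale c u) = cscale c (qmatvec x u)"
  unfolding qmatvec_def cscale_eq by (simp_all add: algebra_simps)

definition dot :: "quat \<Rightarrow> quat \<Rightarrow> complex" where
  "dot u v = fst u * fst v + snd u * snd v"

lemma dot_qmul_left: "dot (qmul w x) u = dot w (qmatvec x u)"
  unfolding dot_def qmul_def qmatvec_def by (simp add: algebra_simps)

lemma dot_cscale_left: "dot (cscale c v) u = c * dot v u"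
  and dot_cscale_right: "dot v (cscale c u) = c * dot v u"
  unfolding dot_def cscale_eq by (simp_all add: algebra_simps)

lemma norm_dot_le: "cmod (dot v u) \<le> norm v * norm u"
proof -
  have "cmod (dot v u) \<le> cmod (fst v) * cmod (fst u) + cmod (snd v) * cmod (snd u)"
    unfolding dot_def by (metis norm_mult norm_triangle_ineq)
  also have "\<dots> = inner (cmod (fst v), cmod (snd v)) (cmod (fst u), cmod (snd u))"
    by simp
  also have "\<dots> \<le> norm (cmod (fst v), cmod (snd v)) * norm (cmod (fst u), cmod (snd u))"
    by (rule norm_cauchy_schwarz)
  also have "\<dots> = norm v * norm u"
    by (cases u, cases v) (simp add: norm_Pair)
  finally show ?thesis .
qed

lemma dot_cnj_self: "dot (cnj (fst v), cnj (snd v)) v = of_real ((norm v)\<^sup>2)"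
  unfolding dot_def norm_quat_power2 of_real_add complex_norm_square by (simp add: mult.commute)

lemma bounded_linear_dot_left: "bounded_linear (\<lambda>w. dot w u)"
  by (rule bounded_linear_intro[where K="norm u"])
     (auto simp: dot_def algebra_simps scaleR_conv_of_real norm_dot_le[unfolded dot_def])

lemma bounded_linear_dot_right: "bounded_linear (\<lambda>u. dot w u)"
  by (rule bounded_linear_intro[where K="norm w"])
     (auto simp: dot_def algebra_simps scaleR_conv_of_real norm_dot_le[unfolded dot_def])

section \<open>The discrete Parseval identity\<close>

lemma cis_root_of_unity_eq_1_imp_eq:
  fixes M j l :: nat
  assumes j: "j < M" and l: "l < M" and one: "cis (2 * pi * (real j - real l) / M) = 1"
  shows "j = l"
proof -
  obtain n :: int where "2 * pi * (real j - real l) / real M = of_int (2 * n) * pi"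
    using one by (auto simp: cis_conv_exp exp_eq_1)
  then have "(2 * pi) * (real j - real l) = (2 * pi) * (of_int n * real M)"
    using j by (simp add: field_simps)
  then have "real_of_int (int j - int l) = real_of_int (n * int M)"
    by simp
  then have n: "int j - int l = n * int M"
    by (simp only: of_int_eq_iff)
  have "\<bar>int j - int l\<bar> < int M"
    using j l by auto
  then have "\<bar>n\<bar> * int M < 1 * int M"
    using n by (simp add: abs_mult)
  then have "\<bar>n\<bar> < 1"
    by (rule mult_right_less_imp_less) simp
  then show ?thesis
    using n by simp
qed

lemma sum_roots_of_unity_orthogonal:
  fixes M j l :: nat
  assumes M: "M > 0" and j: "j < M" and l: "l < M"
  defines "w \<equiv> cis (2 * pi / M)"
  shows "(\<Sum>k<M. (w ^ j * cnj (w ^ l)) ^ k) = (if j = l then of_nat M else 0)"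
proof -
  define x where "x = w ^ j * cnj (w ^ l)"
  have "x = cis (real j * (2 * pi / M)) * cnj (cis (real l * (2 * pi / M)))"
    by (simp only: x_def w_def Complex.DeMoivre)
  also have "\<dots> = cis (real j * (2 * pi / M) + - (real l * (2 * pi / M)))"
    by (simp only: cis_cnj cis_mult)
  also have "\<dots> = cis (2 * pi * (real j - real l) / M)"
    by (rule arg_cong[where f=cis]) (use M in \<open>simp add: field_simps\<close>)
  finally have x: "x = cis (2 * pi * (real j - real l) / M)" .
  show ?thesis
  proof (cases "j = l")
    case True
    then have "x = 1"
      using x by simp
    then show ?thesis
      using True x_def by simp
  next
    case False
    have "w ^ M = 1"
      using M by (simp add: w_def Complex.DeMoivre)
    moreover have "x ^ M = (w ^ M) ^ j * cnj ((w ^ M) ^ l)"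
      unfolding x_def by (simp add: power_mult_distrib power_mult[symmetric] mult.commute)
    ultimately have "x ^ M = 1"
      by simp
    moreover have "x \<noteq> 1"
      using cis_root_of_unity_eq_1_imp_eq[OF j l] False by (auto simp: x)
    ultimately show ?thesis
      using False unfolding x_def[symmetric] by (simp add: sum_gp_strict)
  qed
qed

lemma parseval_roots_of_unity:
  fixes c :: "nat \<Rightarrow> complex" and r :: real
  assumes M: "M > 0"
  defines "w \<equiv> cis (2 * pi / M)"
  shows "(\<Sum>k<M. (cmod (\<Sum>j<M. c j * (of_real r * w ^ k) ^ j))\<^sup>2)
         = real M * (\<Sum>j<M. (cmod (c j))\<^sup>2 * r ^ (2 * j))"
proof -
  define a where "a j l = c j * cnj (c l) * of_real (r ^ (j + l))" for j l
  have "complex_of_real (\<Sum>k<M. (cmod (\<Sum>j<M. c j * (of_real r * w ^ k) ^ j))\<^sup>2)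
      = (\<Sum>k<M. \<Sum>j<M. \<Sum>l<M. a j l * (w ^ j * cnj (w ^ l)) ^ k)"
    unfolding of_real_sum complex_norm_square a_def
    by (simp add: sum_distrib_left sum_distrib_right cnj_sum power_mult_distrib
        power_add algebra_simps flip: power_mult)
       (rule sum.cong[OF refl], subst sum.swap, simp only: mult.left_commute)
  also have "\<dots> = (\<Sum>j<M. \<Sum>l<M. a j l * (\<Sum>k<M. (w ^ j * cnj (w ^ l)) ^ k))"
    by (subst sum.swap, rule sum.cong[OF refl], subst sum.swap) (simp add: sum_distrib_left)
  also have "\<dots> = (\<Sum>j<M. \<Sum>l<M. a j l * (if j = l then of_nat M else 0))"
    using sum_roots_of_unity_orthogonal[OF M] unfolding w_def by (intro sum.cong refl) simp
  also have "\<dots> = (\<Sum>j<M. complex_of_real (real M * ((cmod (c j))\<^sup>2 * r ^ (2 * j))))"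
    by (simp add: if_distrib a_def mult_2 mult_ac cong: if_cong)
       (simp add: complex_norm_square mult_ac mult_2_right flip: of_real_power)
  also have "\<dots> = complex_of_real (real M * (\<Sum>j<M. (cmod (c j))\<^sup>2 * r ^ (2 * j)))"
    by (simp only: of_real_sum sum_distrib_left)
  finally show ?thesis
    using of_real_eq_iff by blast
qed

lemma parseval_roots_of_unity_quat:
  fixes V :: "nat \<Rightarrow> quat" and r :: real
  assumes M: "M > 0"
  defines "w \<equiv> cis (2 * pi / M)"
  shows "(\<Sum>k<M. (norm (\<Sum>j<M. cscale ((of_real r * w ^ k) ^ j) (V j)))\<^sup>2)
         = real M * (\<Sum>j<M. (norm (V j))\<^sup>2 * r ^ (2 * j))"
proof -
  have "(\<Sum>k<M. (norm (\<Sum>j<M. cscale ((of_real r * w ^ k) ^ j) (V j)))\<^sup>2)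
     = (\<Sum>k<M. (cmod (\<Sum>j<M. fst (V j) * (of_real r * w ^ k) ^ j))\<^sup>2)
     + (\<Sum>k<M. (cmod (\<Sum>j<M. snd (V j) * (of_real r * w ^ k) ^ j))\<^sup>2)"
    by (simp add: norm_quat_power2 cscale_eq fst_sum snd_sum sum.distrib mult.commute)
  also have "\<dots> = real M * (\<Sum>j<M. (norm (V j))\<^sup>2 * r ^ (2 * j))"
    unfolding w_def parseval_roots_of_unity[OF M]
    by (simp add: norm_quat_power2 sum.distrib algebra_simps)
  finally show ?thesis .
qed

section \<open>Contractive analytic symbols\<close>

text \<open>The \<open>T k\<close> are the Taylor coefficients of an operator-valued analytic function
  \<open>\<Sum>k. z ^ k T k\<close> on the unit disc that is bounded by 1; the causal convolution it induces
  is then a contraction of \<open>l\<^sup>2\<close> (\<open>conv_l2_le\<close>).\<close>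

locale contractive_symbol =
  fixes T :: "nat \<Rightarrow> quat \<Rightarrow> quat" and \<beta> :: "nat \<Rightarrow> real"
  assumes T_add: "T k (u + v) = T k u + T k v"
    and T_cscale: "T k (cscale c u) = cscale c (T k u)"
    and norm_T_le: "norm (T k u) \<le> \<beta> k * norm u"
    and summable_\<beta>: "0 \<le> r \<Longrightarrow> r < 1 \<Longrightarrow> summable (\<lambda>k. \<beta> k * r ^ k)"
    and norm_symbol_le: "cmod z < 1 \<Longrightarrow> norm (\<Sum>k. cscale (z ^ k) (T k u)) \<le> norm u"
begin

lemma T_zero [simp]: "T k 0 = 0"
  using T_cscale[of k 0 0] by (simp add: cscale_eq zero_prod_def)

lemma T_sum: "T k (\<Sum>i\<in>A. f i) = (\<Sum>i\<in>A. T k (f i))"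
  by (induct A rule: infinite_finite_induct) (auto simp: T_add)

definition symbol_tail :: "real \<Rightarrow> nat \<Rightarrow> real" where
  "symbol_tail r L = (\<Sum>n. \<beta> (n + L) * r ^ (n + L))"

lemma symbol_tail_tendsto_0: "0 \<le> r \<Longrightarrow> r < 1 \<Longrightarrow> symbol_tail r \<longlonglongrightarrow> 0"
  unfolding symbol_tail_def by (rule suminf_exist_split2[OF summable_\<beta>])

lemma norm_truncated_symbol_le:
  assumes r: "0 \<le> r" "r < 1" and z: "cmod z \<le> r"
  shows "norm (\<Sum>k<L. cscale (z ^ k) (T k u)) \<le> (1 + symbol_tail r L) * norm u"
proof -
  have term_le: "norm (cscale (z ^ k) (T k u)) \<le> \<beta> k * r ^ k * norm u" for k
  proof -
    have "norm (cscale (z ^ k) (T k u)) = cmod z ^ k * norm (T k u)"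
      by (simp add: norm_cscale norm_power)
    also have "\<dots> \<le> r ^ k * (\<beta> k * norm u)"
      by (intro mult_mono power_mono norm_T_le) (use z r in auto)
    finally show ?thesis by (simp add: mult_ac)
  qed
  have majorant: "summable (\<lambda>k. \<beta> k * r ^ k * norm u)"
    by (intro summable_mult2 summable_\<beta> r)
  have "summable (\<lambda>k. cscale (z ^ k) (T k u))"
    by (rule summable_norm_cancel, rule summable_comparison_test[OF _ majorant])
       (use term_le in auto)
  then have "(\<Sum>k<L. cscale (z ^ k) (T k u))
      = (\<Sum>k. cscale (z ^ k) (T k u)) - (\<Sum>n. cscale (z ^ (n + L)) (T (n + L) u))"
    by (simp add: suminf_split_initial_segment[of _ L])
  also have "norm \<dots> \<le> norm u + symbol_tail r L * norm u"
  proof (rule order_trans[OF norm_triangle_ineq4 add_mono])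
    show "norm (\<Sum>k. cscale (z ^ k) (T k u)) \<le> norm u"
      using z r by (intro norm_symbol_le) simp
    have "norm (\<Sum>n. cscale (z ^ (n + L)) (T (n + L) u)) \<le> (\<Sum>n. \<beta> (n + L) * r ^ (n + L) * norm u)"
      by (rule norm_suminf_le) (use term_le summable_ignore_initial_segment[OF majorant] in auto)
    also have "\<dots> = symbol_tail r L * norm u"
      unfolding symbol_tail_def
      by (rule suminf_mult2[symmetric], rule summable_ignore_initial_segment[OF summable_\<beta>[OF r]])
    finally show "norm (\<Sum>n. cscale (z ^ (n + L)) (T (n + L) u)) \<le> symbol_tail r L * norm u" .
  qed
  finally show ?thesis by (simp add: algebra_simps)
qed

lemma truncated_conv_generating_function:
  assumes p: "\<And>l. d \<le> l \<Longrightarrow> p l = 0"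
  shows "(\<Sum>j<L + d. cscale (z ^ j) (\<Sum>k\<le>j. if k < L then T k (p (j - k)) else 0))
         = (\<Sum>k<L. cscale (z ^ k) (T k (\<Sum>l<L + d. cscale (z ^ l) (p l))))"
proof -
  define g where "g k l = cscale (z ^ (k + l)) (if k < L then T k (p l) else 0)" for k l
  have "(\<Sum>j<L + d. cscale (z ^ j) (\<Sum>k\<le>j. if k < L then T k (p (j - k)) else 0))
      = (\<Sum>j<L + d. \<Sum>k\<le>j. g k (j - k))"
    unfolding g_def by (auto simp: cscale_sum intro!: sum.cong)
  also have "\<dots> = (\<Sum>(k, l)\<in>{(k, l). k + l < L + d}. g k l)"
    by (rule sum.triangle_reindex[symmetric])
  also have "\<dots> = (\<Sum>(k, l)\<in>{..<L} \<times> {..<d}. g k l)"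
  proof (rule sum.mono_neutral_right)
    show "finite {(k, l). k + l < L + d}"
      by (rule finite_subset[of _ "{..<L + d} \<times> {..<L + d}"]) auto
    show "\<forall>x\<in>{(k, l). k + l < L + d} - {..<L} \<times> {..<d}. (case x of (k, l) \<Rightarrow> g k l) = 0"
    proof
      fix x assume "x \<in> {(k, l). k + l < L + d} - {..<L} \<times> {..<d}"
      then obtain k l where x: "x = (k, l)" "\<not> (k < L \<and> l < d)" by auto
      show "(case x of (k, l) \<Rightarrow> g k l) = 0"
        using p[of l] x by (cases "k < L") (auto simp: g_def)
    qed
  qed auto
  also have "\<dots> = (\<Sum>k<L. \<Sum>l<d. g k l)"
    by (simp add: sum.cartesian_product)
  also have "\<dots> = (\<Sum>k<L. \<Sum>l<L + d. g k l)"
    using p by (intro sum.cong refl sum.mono_neutral_left) (auto simp: g_def)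
  also have "\<dots> = (\<Sum>k<L. cscale (z ^ k) (T k (\<Sum>l<L + d. cscale (z ^ l) (p l))))"
    unfolding g_def by (auto simp: T_sum T_cscale cscale_sum cscale_cscale power_add intro!: sum.cong)
  finally show ?thesis .
qed

lemma sum_weighted_le_finite_support:
  assumes "0 \<le> r" "r \<le> 1" and "\<And>l. d \<le> l \<Longrightarrow> p l = 0" and "d \<le> M"
  shows "(\<Sum>l<M. (norm (p l))\<^sup>2 * r ^ (2 * l)) \<le> (\<Sum>l<d. (norm (p l))\<^sup>2)"
proof -
  have "(\<Sum>l<M. (norm (p l))\<^sup>2 * r ^ (2 * l)) \<le> (\<Sum>l<M. (norm (p l))\<^sup>2)"
    using assms(1,2) by (intro sum_mono mult_left_le) (auto simp: power_le_one)
  also have "\<dots> = (\<Sum>l<d. (norm (p l))\<^sup>2)"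
    using assms(3,4) by (intro sum.mono_neutral_right) auto
  finally show ?thesis .
qed

text \<open>Truncating the symbol at degree \<open>L\<close> turns everything into polynomials of degree
  below \<open>L + d\<close>, so Parseval at the \<open>(L + d)\<close>-th roots of unity applies on the circle of
  radius \<open>r\<close>; the truncation error is \<open>symbol_tail r L\<close>.\<close>

lemma weighted_conv_le:
  assumes r: "0 < r" "r < 1" and p: "\<And>l. d \<le> l \<Longrightarrow> p l = 0" and L: "0 < L" "N \<le> L"
  shows "(\<Sum>j<N. r ^ (2 * j) * (norm (\<Sum>k\<le>j. T k (p (j - k))))\<^sup>2)
         \<le> (1 + symbol_tail r L)\<^sup>2 * (\<Sum>l<d. (norm (p l))\<^sup>2)"
proof -
  define M where "M = L + d"
  have M: "M > 0" using L by (simp add: M_def)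
  define w where "w = cis (2 * pi / M)"
  define Q where "Q j = (\<Sum>k\<le>j. if k < L then T k (p (j - k)) else 0)" for j
  define P where "P z = (\<Sum>l<M. cscale (z ^ l) (p l))" for z
  define \<epsilon> where "\<epsilon> = symbol_tail r L"
  have gen: "(\<Sum>j<M. cscale (z ^ j) (Q j)) = (\<Sum>i<L. cscale (z ^ i) (T i (P z)))" for z
    unfolding Q_def P_def M_def by (rule truncated_conv_generating_function[OF p])
  have "(\<Sum>j<N. r ^ (2 * j) * (norm (\<Sum>k\<le>j. T k (p (j - k))))\<^sup>2)
      = (\<Sum>j<N. (norm (Q j))\<^sup>2 * r ^ (2 * j))"
    unfolding Q_def using L by (auto intro!: sum.cong simp: mult.commute)
  also have "\<dots> \<le> (\<Sum>j<M. (norm (Q j))\<^sup>2 * r ^ (2 * j))"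
    using L by (intro sum_mono2) (auto simp: M_def)
  also have "\<dots> = (\<Sum>k<M. (norm (\<Sum>j<M. cscale ((of_real r * w ^ k) ^ j) (Q j)))\<^sup>2) / M"
    using M unfolding w_def parseval_roots_of_unity_quat[OF M] by simp
  also have "\<dots> = (\<Sum>k<M. (norm (\<Sum>i<L. cscale ((of_real r * w ^ k) ^ i)
                                        (T i (P (of_real r * w ^ k)))))\<^sup>2) / M"
    by (simp only: gen)
  also have "\<dots> \<le> (\<Sum>k<M. ((1 + \<epsilon>) * norm (P (of_real r * w ^ k)))\<^sup>2) / M"
  proof (intro divide_right_mono sum_mono power_mono)
    fix k
    have "cmod (of_real r * w ^ k) \<le> r"
      using r by (simp add: w_def norm_mult norm_power)
    then show "norm (\<Sum>i<L. cscale ((of_real r * w ^ k) ^ i) (T i (P (of_real r * w ^ k))))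
        \<le> (1 + \<epsilon>) * norm (P (of_real r * w ^ k))"
      unfolding \<epsilon>_def using r by (intro norm_truncated_symbol_le) auto
  qed auto
  also have "\<dots> = (1 + \<epsilon>)\<^sup>2 * (\<Sum>k<M. (norm (P (of_real r * w ^ k)))\<^sup>2) / M"
    by (simp add: power_mult_distrib sum_distrib_left)
  also have "\<dots> = (1 + \<epsilon>)\<^sup>2 * (\<Sum>l<M. (norm (p l))\<^sup>2 * r ^ (2 * l))"
    using M unfolding P_def w_def parseval_roots_of_unity_quat[OF M] by simp
  also have "\<dots> \<le> (1 + \<epsilon>)\<^sup>2 * (\<Sum>l<d. (norm (p l))\<^sup>2)"
    using r p by (intro mult_left_mono sum_weighted_le_finite_support) (auto simp: M_def)
  finally show ?thesis unfolding \<epsilon>_def .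
qed

lemma weighted_conv_le_l2:
  assumes r: "0 < r" "r < 1" and p: "\<And>l. d \<le> l \<Longrightarrow> p l = 0"
  shows "(\<Sum>j<N. r ^ (2 * j) * (norm (\<Sum>k\<le>j. T k (p (j - k))))\<^sup>2) \<le> (\<Sum>l<d. (norm (p l))\<^sup>2)"
proof -
  have "(\<lambda>L. (1 + symbol_tail r L)\<^sup>2 * (\<Sum>l<d. (norm (p l))\<^sup>2)) \<longlonglongrightarrow> (1 + 0)\<^sup>2 * (\<Sum>l<d. (norm (p l))\<^sup>2)"
    using r by (intro tendsto_intros symbol_tail_tendsto_0) auto
  moreover have "eventually (\<lambda>L. (\<Sum>j<N. r ^ (2 * j) * (norm (\<Sum>k\<le>j. T k (p (j - k))))\<^sup>2)
      \<le> (1 + symbol_tail r L)\<^sup>2 * (\<Sum>l<d. (norm (p l))\<^sup>2)) sequentially"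
    using eventually_ge_at_top[of "Suc N"]
    by eventually_elim (rule weighted_conv_le[OF r p], auto)
  ultimately show ?thesis
    by (auto intro: tendsto_lowerbound)
qed

theorem conv_l2_le: "(\<Sum>j<N. (norm (\<Sum>k\<le>j. T k (p (j - k))))\<^sup>2) \<le> (\<Sum>l<N. (norm (p l))\<^sup>2)"
proof -
  define p' where "p' l = (if l < N then p l else 0)" for l
  define X where "X r = (\<Sum>j<N. r ^ (2 * j) * (norm (\<Sum>k\<le>j. T k (p' (j - k))))\<^sup>2)" for r :: real
  have "(X \<longlongrightarrow> X 1) (at_left 1)"
    unfolding X_def by (intro tendsto_intros)
  moreover have "eventually (\<lambda>r. X r \<le> (\<Sum>l<N. (norm (p' l))\<^sup>2)) (at_left (1::real))"
    using eventually_at_left_real[of 0 1, simplified]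
    by eventually_elim (unfold X_def, rule weighted_conv_le_l2, auto simp: p'_def)
  ultimately have "X 1 \<le> (\<Sum>l<N. (norm (p' l))\<^sup>2)"
    by (rule tendsto_upperbound) simp
  moreover have "(\<Sum>k\<le>j. T k (p' (j - k))) = (\<Sum>k\<le>j. T k (p (j - k)))" if "j < N" for j
    using that by (intro sum.cong) (auto simp: p'_def)
  then have "X 1 = (\<Sum>j<N. (norm (\<Sum>k\<le>j. T k (p (j - k))))\<^sup>2)"
    unfolding X_def by simp
  ultimately show ?thesis
    by (simp add: p'_def)
qed

end

section \<open>Star-multiplication by a self-map of the ball\<close>

definition self_map_coeffs :: "(nat \<Rightarrow> quat) \<Rightarrow> bool" where
  "self_map_coeffs b \<longleftrightarrow> (\<forall>q\<in>qball. summable (\<lambda>n. qmul (qpow q n) (b n)) \<and> norm (ps b q) < 1)"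

lemma summable_norm_coeff_mult_power:
  assumes "\<forall>q\<in>qball. summable (\<lambda>n. qmul (qpow q n) (b n))" and r: "0 \<le> r" "r < 1"
  shows "summable (\<lambda>n. norm (b n) * r ^ n)"
proof -
  define t where "t = (1 + r) / 2"
  have t: "0 < t" "t < 1" "r < t" using r by (auto simp: t_def)
  have "(complex_of_real t, 0) \<in> qball" using t by (simp add: qball_iff norm_Pair)
  then have "summable (\<lambda>n. qmul (qpow (complex_of_real t, 0) n) (b n))" using assms by blast
  then have "summable (\<lambda>n. t ^ n *\<^sub>R b n)" by (simp only: qpow_of_real qmul_of_real_left)
  then have "Bseq (\<lambda>n. t ^ n *\<^sub>R b n)"
    by (intro convergent_imp_Bseq summable_LIMSEQ_zero[THEN convergentI])
  then obtain K where K: "K > 0" "\<And>n. norm (t ^ n *\<^sub>R b n) \<le> K" unfolding Bseq_def by blast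
  have le: "norm (b n) * r ^ n \<le> K * (r / t) ^ n" for n
  proof -
    have "norm (b n) * r ^ n = (t ^ n * norm (b n)) * (r / t) ^ n" using t by (simp add: power_divide)
    also have "\<dots> \<le> K * (r / t) ^ n" using K(2)[of n] t r by (intro mult_right_mono) auto
    finally show ?thesis .
  qed
  have "summable (\<lambda>n. K * (r / t) ^ n)" using t r by (intro summable_mult summable_geometric) auto
  then show ?thesis
    by (rule summable_comparison_test') (use r le in auto)
qed

lemma self_map_coeffs_summable:
  assumes "self_map_coeffs b" and "cmod z < 1"
  shows "summable (\<lambda>n. norm (b n) * cmod z ^ n)"
  using assms by (intro summable_norm_coeff_mult_power) (auto simp: self_map_coeffs_def)

lemma norm_symbol_right_mult_le:
  assumes b: "self_map_coeffs b" and z: "cmod z < 1"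
  shows "norm (\<Sum>k. cscale (z ^ k) (qmul w (b k))) \<le> norm w"
proof (cases "w = 0")
  case False
  obtain q where q: "norm q = cmod z" "qmul w q = cscale z w"
    using qmul_eq_cscale_conj[OF False] .
  have qpow: "qmul w (qpow q n) = cscale (z ^ n) w" for n
    by (induct n) (simp_all add: qmul_assoc[symmetric] q(2) qmul_cscale_left cscale_cscale)
  have sums: "summable (\<lambda>n. qmul (qpow q n) (b n))" and ps_q: "norm (ps b q) < 1"
    using b q(1) z by (auto simp: self_map_coeffs_def qball_iff)
  have "qmul w (ps b q) = (\<Sum>k. qmul w (qmul (qpow q k) (b k)))"
    unfolding ps_def by (rule bounded_linear.suminf[OF bounded_linear_qmul_right sums])
  also have "\<dots> = (\<Sum>k. cscale (z ^ k) (qmul w (b k)))"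
    by (simp add: qmul_assoc[symmetric] qpow qmul_cscale_left)
  finally have "norm (\<Sum>k. cscale (z ^ k) (qmul w (b k))) = norm w * norm (ps b q)"
    by (simp flip: norm_qmul)
  also have "\<dots> \<le> norm w"
    using ps_q by (simp add: mult_left_le)
  finally show ?thesis .
qed simp

lemma summable_symbol_right_mult:
  assumes "self_map_coeffs b" and "cmod z < 1"
  shows "summable (\<lambda>k. cscale (z ^ k) (qmul w (b k)))"
proof (rule summable_norm_cancel, rule summable_comparison_test'[where g="\<lambda>k. norm w * (norm (b k) * cmod z ^ k)"])
  show "summable (\<lambda>k. norm w * (norm (b k) * cmod z ^ k))"
    by (intro summable_mult self_map_coeffs_summable assms)
qed (simp add: norm_cscale norm_qmul norm_power mult_ac)

lemma summable_symbol_left_mult: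
  assumes "self_map_coeffs b" and "cmod z < 1"
  shows "summable (\<lambda>k. cscale (z ^ k) (qmatvec (b k) u))"
proof (rule summable_norm_cancel, rule summable_comparison_test'[where g="\<lambda>k. norm u * (norm (b k) * cmod z ^ k)"])
  show "summable (\<lambda>k. norm u * (norm (b k) * cmod z ^ k))"
    by (intro summable_mult self_map_coeffs_summable assms)
qed (simp add: norm_cscale norm_qmatvec norm_power mult_ac)

text \<open>By \<open>dot_qmul_left\<close>, the left symbol is the transpose of the right one for the
  pairing \<open>dot\<close>, so its bound follows by duality.\<close>

lemma norm_symbol_left_mult_le:
  assumes b: "self_map_coeffs b" and z: "cmod z < 1"
  shows "norm (\<Sum>k. cscale (z ^ k) (qmatvec (b k) u)) \<le> norm u"
proof -
  define V where "V = (\<Sum>k. cscale (z ^ k) (qmatvec (b k) u))"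
  define V' where "V' = (cnj (fst V), cnj (snd V))"
  have "norm V' = norm V"
    by (cases V) (simp add: V'_def norm_Pair)
  have "complex_of_real ((norm V)\<^sup>2) = dot V' V"
    by (simp add: V'_def dot_cnj_self)
  also have "\<dots> = (\<Sum>k. dot V' (cscale (z ^ k) (qmatvec (b k) u)))"
    unfolding V_def
    by (rule bounded_linear.suminf[OF bounded_linear_dot_right summable_symbol_left_mult[OF b z]])
  also have "\<dots> = (\<Sum>k. dot (cscale (z ^ k) (qmul V' (b k))) u)"
    by (simp add: dot_cscale_left dot_cscale_right dot_qmul_left)
  also have "\<dots> = dot (\<Sum>k. cscale (z ^ k) (qmul V' (b k))) u"
    by (rule bounded_linear.suminf[OF bounded_linear_dot_left summable_symbol_right_mult[OF b z], symmetric])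
  finally have "(norm V)\<^sup>2 \<le> norm (\<Sum>k. cscale (z ^ k) (qmul V' (b k))) * norm u"
    by (metis norm_dot_le norm_of_real abs_power2 abs_norm_cancel)
  also have "\<dots> \<le> norm V * norm u"
    using norm_symbol_right_mult_le[OF b z, of V'] \<open>norm V' = norm V\<close>
    by (intro mult_right_mono) auto
  finally show ?thesis
    unfolding V_def[symmetric] by (cases "norm V = 0") (auto simp: power2_eq_square)
qed

lemma contractive_symbol_right_mult:
  assumes "self_map_coeffs b"
  shows "contractive_symbol (\<lambda>k u. qmul u (b k)) (\<lambda>k. norm (b k))"
proof
  show "qmul (u + v) (b k) = qmul u (b k) + qmul v (b k)" for k u v
    by (rule qmul_add_left)
  show "qmul (cscale c u) (b k) = cscale c (qmul u (b k))" for k c u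
    by (rule qmul_cscale_left)
  show "norm (qmul u (b k)) \<le> norm (b k) * norm u" for k u
    by (simp add: norm_qmul)
  show "summable (\<lambda>k. norm (b k) * r ^ k)" if "0 \<le> r" "r < 1" for r
    using assms that by (intro summable_norm_coeff_mult_power) (auto simp: self_map_coeffs_def)
  show "norm (\<Sum>k. cscale (z ^ k) (qmul u (b k))) \<le> norm u" if "cmod z < 1" for z u
    by (rule norm_symbol_right_mult_le[OF assms that])
qed

lemma contractive_symbol_left_mult:
  assumes "self_map_coeffs b"
  shows "contractive_symbol (\<lambda>k u. qmatvec (b k) u) (\<lambda>k. norm (b k))"
proof
  show "qmatvec (b k) (u + v) = qmatvec (b k) u + qmatvec (b k) v" for k u v
    by (rule qmatvec_add)
  show "qmatvec (b k) (cscale c u) = cscale c (qmatvec (b k) u)" for k c u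
    by (rule qmatvec_cscale)
  show "norm (qmatvec (b k) u) \<le> norm (b k) * norm u" for k u
    by (simp add: norm_qmatvec)
  show "summable (\<lambda>k. norm (b k) * r ^ k)" if "0 \<le> r" "r < 1" for r
    using assms that by (intro summable_norm_coeff_mult_power) (auto simp: self_map_coeffs_def)
  show "norm (\<Sum>k. cscale (z ^ k) (qmatvec (b k) u)) \<le> norm u" if "cmod z < 1" for z u
    by (rule norm_symbol_left_mult_le[OF assms that])
qed

lemma sprod_eq_rev: "sprod a b j = (\<Sum>k\<le>j. qmul (a (j - k)) (b k))"
proof -
  have "(\<Sum>k\<le>j. qmul (a (j - k)) (b k)) = (\<Sum>k\<le>j. qmul (a (j - k)) (b (j - (j - k))))"
    by (intro sum.cong) auto
  also have "\<dots> = sprod a b j"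
    using sum.nat_diff_reindex[of "\<lambda>k. qmul (a k) (b (j - k))" "Suc j"]
    by (simp add: sprod_def lessThan_Suc_atMost)
  finally show ?thesis ..
qed

lemma norm_sprod_right_l2_le:
  assumes "self_map_coeffs b"
  shows "(\<Sum>j<N. (norm (sprod h b j))\<^sup>2) \<le> (\<Sum>j<N. (norm (h j))\<^sup>2)"
  using contractive_symbol.conv_l2_le[OF contractive_symbol_right_mult[OF assms], where N=N and p=h]
  by (simp add: sprod_eq_rev)

lemma norm_sprod_left_l2_le:
  assumes "self_map_coeffs b"
  shows "(\<Sum>j<N. (norm (sprod b h j))\<^sup>2) \<le> (\<Sum>j<N. (norm (h j))\<^sup>2)"
proof -
  have "qcol (sprod b h j) = (\<Sum>k\<le>j. qmatvec (b k) (qcol (h (j - k))))" for j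
    by (simp add: sprod_def qcol_sum qcol_qmul)
  then have "norm (sprod b h j) = norm (\<Sum>k\<le>j. qmatvec (b k) (qcol (h (j - k))))" for j
    by (metis norm_qcol)
  then show ?thesis
    using contractive_symbol.conv_l2_le[OF contractive_symbol_left_mult[OF assms], where N=N and p="qcol \<circ> h"]
    by simp
qed

section \<open>Star powers and the coefficients of the composition operators\<close>

lemma sprod_assoc: "sprod (sprod a b) c = sprod a (sprod b c)"
proof
  fix n
  define f where "f k l = qmul (a k) (qmul (b l) (c (n - k - l)))" for k l
  have "sprod (sprod a b) c n = (\<Sum>j\<le>n. \<Sum>k\<le>j. f k (j - k))"
    unfolding sprod_def f_def
    by (auto simp: qmul_sum_left qmul_assoc intro!: sum.cong arg_cong[where f="\<lambda>x. qmul _ (qmul _ (c x))"])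
  also have "\<dots> = (\<Sum>(k, l)\<in>{(k, l). k + l \<le> n}. f k l)"
    by (rule sum.triangle_reindex_eq[symmetric])
  also have "{(k, l). k + l \<le> n} = Sigma {..n} (\<lambda>k. {..n - k})"
    by auto
  also have "(\<Sum>(k, l)\<in>Sigma {..n} (\<lambda>k. {..n - k}). f k l) = (\<Sum>k\<le>n. \<Sum>l\<le>n - k. f k l)"
    by (rule sum.Sigma[symmetric]) auto
  also have "\<dots> = sprod a (sprod b c) n"
    unfolding sprod_def f_def by (simp add: qmul_sum_right diff_diff_add)
  finally show "sprod (sprod a b) c n = sprod a (sprod b c) n" .
qed

lemma sprod_spow_0_left: "sprod (spow b 0) x = x"
proof
  fix n
  have "sprod (spow b 0) x n = (\<Sum>k\<le>n. if k = 0 then x n else 0)"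
    unfolding sprod_def by (intro sum.cong) auto
  then show "sprod (spow b 0) x n = x n" by simp
qed

lemma sprod_spow_0_right: "sprod x (spow b 0) = x"
proof
  fix n
  have "sprod x (spow b 0) n = (\<Sum>k\<le>n. if k = n then x n else 0)"
    unfolding sprod_def by (intro sum.cong) auto
  then show "sprod x (spow b 0) n = x n" by simp
qed

lemma spow_Suc_right: "spow b (Suc n) = sprod (spow b n) b"
proof (induct n)
  case 0
  show ?case
    using sprod_spow_0_left[of b b] sprod_spow_0_right[of b b] by (simp only: spow.simps(2))
next
  case (Suc n)
  have "spow b (Suc (Suc n)) = sprod b (sprod (spow b n) b)"
    using Suc by simp
  also have "\<dots> = sprod (spow b (Suc n)) b"
    by (simp add: sprod_assoc)
  finally show ?case .
qed

lemma spow_eq_0_below: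
  assumes "b 0 = 0" and "m < n"
  shows "spow b n m = 0"
  using assms(2)
proof (induct n arbitrary: m)
  case (Suc n)
  have "qmul (b k) (spow b n (m - k)) = 0" if "k \<le> m" for k
    using Suc that assms(1) by (cases "k = 0") simp_all
  then show ?case by (simp add: sprod_def)
qed simp

lemma spow_l2_le_1:
  assumes "self_map_coeffs b"
  shows "(\<Sum>m<N. (norm (spow b n m))\<^sup>2) \<le> 1"
proof (induct n arbitrary: N)
  case 0
  have "(\<Sum>m<N. (norm (spow b 0 m))\<^sup>2) = (\<Sum>m<N. if m = 0 then 1 else 0)"
    by (intro sum.cong) auto
  then show ?case by simp
next
  case (Suc n)
  then show ?case
    using norm_sprod_left_l2_le[OF assms, where N=N and h="spow b n"] by (simp add: order_trans)
qed

lemma norm_spow_le_1: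
  assumes "self_map_coeffs b"
  shows "norm (spow b n m) \<le> 1"
proof -
  have "(norm (spow b n m))\<^sup>2 \<le> (\<Sum>j<Suc m. (norm (spow b n j))\<^sup>2)"
    by (rule member_le_sum) auto
  also have "\<dots> \<le> 1"
    by (rule spow_l2_le_1[OF assms])
  finally show ?thesis
    by (simp add: power_le_one_iff)
qed

text \<open>The \<open>Suc N\<close> in \<open>G_l2\<close> says that \<open>G\<close> delays by one step, as \<open>*\<close>-multiplication by
  \<open>b\<close> with \<open>b 0 = 0\<close> does.\<close>

lemma l2_le_if_recursion:
  fixes F G :: "(nat \<Rightarrow> quat) \<Rightarrow> nat \<Rightarrow> quat"
  assumes rec: "\<And>a m. F a m = (if m = 0 then a 0 else 0) + G (F (\<lambda>n. a (Suc n))) m"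
    and G_l2: "\<And>x N. (\<Sum>j<Suc N. (norm (G x j))\<^sup>2) \<le> (\<Sum>j<N. (norm (x j))\<^sup>2)"
  shows "(\<Sum>m<N. (norm (F a m))\<^sup>2) \<le> (\<Sum>n<N. (norm (a n))\<^sup>2)"
proof (induct N arbitrary: a)
  case (Suc N)
  define a' where "a' n = a (Suc n)" for n
  have G0: "G x 0 = 0" for x
    using G_l2[of x 0] by simp
  have "(\<Sum>m<Suc N. (norm (F a m))\<^sup>2) = (norm (a 0))\<^sup>2 + (\<Sum>m<N. (norm (G (F a') (Suc m)))\<^sup>2)"
    unfolding sum.lessThan_Suc_shift using rec[of a] G0 by (simp add: a'_def[abs_def])
  also have "\<dots> = (norm (a 0))\<^sup>2 + (\<Sum>m<Suc N. (norm (G (F a') m))\<^sup>2)"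
    unfolding sum.lessThan_Suc_shift by (simp add: G0)
  also have "\<dots> \<le> (norm (a 0))\<^sup>2 + (\<Sum>m<N. (norm (F a' m))\<^sup>2)"
    using G_l2 by simp
  also have "\<dots> \<le> (norm (a 0))\<^sup>2 + (\<Sum>n<N. (norm (a' n))\<^sup>2)"
    using Suc by simp
  also have "\<dots> = (\<Sum>n<Suc N. (norm (a n))\<^sup>2)"
    unfolding sum.lessThan_Suc_shift a'_def ..
  finally show ?case .
qed simp

lemma norm_sprod_left_shift_l2_le:
  assumes "self_map_coeffs b" and "b 0 = 0"
  shows "(\<Sum>j<Suc N. (norm (sprod b x j))\<^sup>2) \<le> (\<Sum>j<N. (norm (x j))\<^sup>2)"
proof -
  define x' where "x' n = (if n < N then x n else 0)" for n
  have "qmul (b k) (x (j - k)) = qmul (b k) (x' (j - k))" if "k \<le> j" "j < Suc N" for j k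
    using that assms(2) by (cases "k = 0") (auto simp: x'_def)
  then have "(\<Sum>j<Suc N. (norm (sprod b x j))\<^sup>2) = (\<Sum>j<Suc N. (norm (sprod b x' j))\<^sup>2)"
    unfolding sprod_def by (intro sum.cong refl arg_cong[where f="\<lambda>y. (norm y)\<^sup>2"]) auto
  also have "\<dots> \<le> (\<Sum>j<Suc N. (norm (x' j))\<^sup>2)"
    by (rule norm_sprod_left_l2_le[OF assms(1)])
  also have "\<dots> = (\<Sum>j<N. (norm (x j))\<^sup>2)"
    by (simp add: x'_def)
  finally show ?thesis .
qed

lemma norm_sprod_right_shift_l2_le:
  assumes "self_map_coeffs b" and "b 0 = 0"
  shows "(\<Sum>j<Suc N. (norm (sprod x b j))\<^sup>2) \<le> (\<Sum>j<N. (norm (x j))\<^sup>2)"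
proof -
  define x' where "x' n = (if n < N then x n else 0)" for n
  have "qmul (x (j - k)) (b k) = qmul (x' (j - k)) (b k)" if "k \<le> j" "j < Suc N" for j k
    using that assms(2) by (cases "k = 0") (auto simp: x'_def)
  then have "(\<Sum>j<Suc N. (norm (sprod x b j))\<^sup>2) = (\<Sum>j<Suc N. (norm (sprod x' b j))\<^sup>2)"
    unfolding sprod_eq_rev by (intro sum.cong refl arg_cong[where f="\<lambda>y. (norm y)\<^sup>2"]) auto
  also have "\<dots> \<le> (\<Sum>j<Suc N. (norm (x' j))\<^sup>2)"
    by (rule norm_sprod_right_l2_le[OF assms(1)])
  also have "\<dots> = (\<Sum>j<N. (norm (x j))\<^sup>2)"
    by (simp add: x'_def)
  finally show ?thesis .
qed

text \<open>Coefficient \<open>m\<close> of \<open>\<Sum>n. b\<^sup>*\<^sup>n a\<^sub>n\<close> and of \<open>\<Sum>n. a\<^sub>n b\<^sup>*\<^sup>n\<close>; cutting the sum at \<open>n \<le> m\<close>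
  is exact only because \<open>b 0 = 0\<close> (\<open>spow_eq_0_below\<close>).\<close>

definition Cop_coeffs :: "(nat \<Rightarrow> quat) \<Rightarrow> (nat \<Rightarrow> quat) \<Rightarrow> nat \<Rightarrow> quat" where
  "Cop_coeffs b a m = (\<Sum>n\<le>m. qmul (spow b n m) (a n))"

definition Dop_coeffs :: "(nat \<Rightarrow> quat) \<Rightarrow> (nat \<Rightarrow> quat) \<Rightarrow> nat \<Rightarrow> quat" where
  "Dop_coeffs b a m = (\<Sum>n\<le>m. qmul (a n) (spow b n m))"

lemma sum_atMost_extend:
  fixes m K :: nat
  assumes "m \<le> K" "\<And>n. m < n \<Longrightarrow> f n = 0"
  shows "(\<Sum>n\<le>K. f n) = (\<Sum>n\<le>m. f n)"
  using assms by (intro sum.mono_neutral_right) auto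

lemma Cop_coeffs_rec:
  assumes b0: "b 0 = 0"
  shows "Cop_coeffs b a m = (if m = 0 then a 0 else 0) + sprod b (Cop_coeffs b (\<lambda>n. a (Suc n))) m"
proof -
  have "sprod b (Cop_coeffs b (\<lambda>n. a (Suc n))) m
      = (\<Sum>k\<le>m. qmul (b k) (\<Sum>n\<le>m. qmul (spow b n (m - k)) (a (Suc n))))"
    unfolding sprod_def Cop_coeffs_def
    by (intro sum.cong refl arg_cong[where f="qmul _"] sum_atMost_extend[symmetric])
       (auto simp: spow_eq_0_below[of b, OF b0])
  also have "\<dots> = (\<Sum>n\<le>m. \<Sum>k\<le>m. qmul (qmul (b k) (spow b n (m - k))) (a (Suc n)))"
    by (simp add: qmul_sum_right qmul_assoc) (rule sum.swap)
  also have "\<dots> = (\<Sum>n\<le>m. qmul (spow b (Suc n) m) (a (Suc n)))"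
    by (simp add: qmul_sum_left[symmetric] sprod_def)
  finally have "sprod b (Cop_coeffs b (\<lambda>n. a (Suc n))) m = (\<Sum>n\<le>m. qmul (spow b (Suc n) m) (a (Suc n)))" .
  moreover have "Cop_coeffs b a m = (\<Sum>n\<le>Suc m. qmul (spow b n m) (a n))"
    unfolding Cop_coeffs_def
    by (rule sum_atMost_extend[symmetric]) (auto simp: spow_eq_0_below[of b, OF b0])
  ultimately show ?thesis
    unfolding sum.atMost_Suc_shift by simp
qed

lemma Dop_coeffs_rec:
  assumes b0: "b 0 = 0"
  shows "Dop_coeffs b a m = (if m = 0 then a 0 else 0) + sprod (Dop_coeffs b (\<lambda>n. a (Suc n))) b m"
proof -
  have "sprod (Dop_coeffs b (\<lambda>n. a (Suc n))) b m
      = (\<Sum>k\<le>m. qmul (\<Sum>n\<le>m. qmul (a (Suc n)) (spow b n k)) (b (m - k)))"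
    unfolding sprod_def Dop_coeffs_def
    by (intro sum.cong refl arg_cong[where f="\<lambda>x. qmul x _"] sum_atMost_extend[symmetric])
       (auto simp: spow_eq_0_below[of b, OF b0])
  also have "\<dots> = (\<Sum>n\<le>m. \<Sum>k\<le>m. qmul (a (Suc n)) (qmul (spow b n k) (b (m - k))))"
    by (simp add: qmul_sum_left qmul_assoc) (rule sum.swap)
  also have "\<dots> = (\<Sum>n\<le>m. qmul (a (Suc n)) (spow b (Suc n) m))"
    by (simp add: qmul_sum_right[symmetric] spow_Suc_right sprod_def del: spow.simps)
  finally have "sprod (Dop_coeffs b (\<lambda>n. a (Suc n))) b m = (\<Sum>n\<le>m. qmul (a (Suc n)) (spow b (Suc n) m))" .
  moreover have "Dop_coeffs b a m = (\<Sum>n\<le>Suc m. qmul (a n) (spow b n m))"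
    unfolding Dop_coeffs_def
    by (rule sum_atMost_extend[symmetric]) (auto simp: spow_eq_0_below[of b, OF b0])
  ultimately show ?thesis
    unfolding sum.atMost_Suc_shift by simp
qed

lemma Cop_coeffs_l2_le:
  assumes "self_map_coeffs b" and "b 0 = 0"
  shows "(\<Sum>m<N. (norm (Cop_coeffs b a m))\<^sup>2) \<le> (\<Sum>n<N. (norm (a n))\<^sup>2)"
  by (rule l2_le_if_recursion[OF Cop_coeffs_rec[of b, OF assms(2)] norm_sprod_left_shift_l2_le[OF assms]])

lemma Dop_coeffs_l2_le:
  assumes "self_map_coeffs b" and "b 0 = 0"
  shows "(\<Sum>m<N. (norm (Dop_coeffs b a m))\<^sup>2) \<le> (\<Sum>n<N. (norm (a n))\<^sup>2)"
  by (rule l2_le_if_recursion[OF Dop_coeffs_rec[of b, OF assms(2)] norm_sprod_right_shift_l2_le[OF assms]])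

section \<open>Power series representations and the Hardy space\<close>

lemma suminf_eq_infsum: "f summable_on (UNIV :: nat set) \<Longrightarrow> suminf f = infsum f UNIV"
  by (metis has_sum_imp_sums has_sum_infsum sums_unique)

lemma suminf_swap_abs_summable:
  fixes F :: "nat \<Rightarrow> nat \<Rightarrow> 'a::banach"
  assumes "(\<lambda>(n, m). F n m) abs_summable_on UNIV \<times> UNIV"
  shows "summable (\<lambda>m. \<Sum>n. F n m)" and "(\<Sum>n. \<Sum>m. F n m) = (\<Sum>m. \<Sum>n. F n m)"
proof -
  have iterated: "(\<lambda>x. \<Sum>y. G x y) = (\<lambda>x. infsum (G x) UNIV) \<and> (\<lambda>x. infsum (G x) UNIV) summable_on UNIV"
    if G: "(\<lambda>(x, y). G x y) abs_summable_on UNIV \<times> UNIV" for G :: "nat \<Rightarrow> nat \<Rightarrow> 'a"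
  proof
    have "G x abs_summable_on UNIV" for x
      using Infinite_Sum.abs_summable_on_Sigma_iff[THEN iffD1, OF G] by simp
    then show "(\<lambda>x. \<Sum>y. G x y) = (\<lambda>x. infsum (G x) UNIV)"
      by (simp add: suminf_eq_infsum abs_summable_summable)
    show "(\<lambda>x. infsum (G x) UNIV) summable_on UNIV"
      by (rule summable_on_Sigma_banach[OF abs_summable_summable[OF G]])
  qed
  have F_swap: "(\<lambda>(m, n). F n m) abs_summable_on UNIV \<times> UNIV"
    using assms by (subst summable_on_swap) (simp add: case_prod_unfold)
  show "summable (\<lambda>m. \<Sum>n. F n m)"
    using iterated[OF F_swap] by (auto intro: summable_on_imp_summable)
  have "(\<Sum>n. \<Sum>m. F n m) = infsum (\<lambda>n. infsum (F n) UNIV) UNIV"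
    using iterated[OF assms] by (simp add: suminf_eq_infsum)
  also have "\<dots> = infsum (\<lambda>m. infsum (\<lambda>n. F n m) UNIV) UNIV"
    by (rule infsum_swap_banach[OF abs_summable_summable[OF assms]])
  also have "\<dots> = (\<Sum>m. \<Sum>n. F n m)"
    using iterated[OF F_swap] by (simp add: suminf_eq_infsum)
  finally show "(\<Sum>n. \<Sum>m. F n m) = (\<Sum>m. \<Sum>n. F n m)" .
qed

lemma summable_on_geometric_product:
  fixes \<sigma> :: real
  assumes "0 \<le> \<sigma>" "\<sigma> < 1"
  shows "(\<lambda>(n, m). \<sigma> ^ n * \<sigma> ^ m) summable_on UNIV \<times> UNIV"
proof -
  have geo: "(\<lambda>m. \<sigma> ^ m) sums (1 / (1 - \<sigma>))"
    using assms by (intro geometric_sums) auto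
  have "(\<lambda>p. \<sigma> ^ fst p * \<sigma> ^ snd p) summable_on Sigma UNIV (\<lambda>_. UNIV)"
  proof (rule summable_on_SigmaI[where g="\<lambda>n. \<sigma> ^ n * (1 / (1 - \<sigma>))"])
    show "((\<lambda>m. \<sigma> ^ fst (n, m) * \<sigma> ^ snd (n, m)) has_sum \<sigma> ^ n * (1 / (1 - \<sigma>))) UNIV" for n
      using sums_mult[OF geo, of "\<sigma> ^ n"] assms by (intro sums_nonneg_imp_has_sum) auto
    show "(\<lambda>n. \<sigma> ^ n * (1 / (1 - \<sigma>))) summable_on UNIV"
      using assms geo by (subst summable_on_UNIV_nonneg_real_iff) (auto intro: summable_mult2 sums_summable)
  qed (use assms in auto)
  then show ?thesis
    by (simp add: case_prod_beta')
qed

lemma ps_rep_suminf_triangular: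
  fixes c :: "nat \<Rightarrow> nat \<Rightarrow> quat"
  assumes bound: "\<And>n m. norm (c n m) \<le> K" and lower: "\<And>n m. m < n \<Longrightarrow> c n m = 0"
  shows "ps_rep (\<lambda>q. \<Sum>n. ps (c n) q) (\<lambda>m. \<Sum>n\<le>m. c n m)"
  unfolding ps_rep_def
proof (intro ballI conjI)
  fix q assume "q \<in> qball"
  define \<sigma> where "\<sigma> = sqrt (norm q)"
  have \<sigma>: "0 \<le> \<sigma>" "\<sigma> < 1" using \<open>q \<in> qball\<close> by (auto simp: \<sigma>_def qball_iff)
  have K: "0 \<le> K" using order_trans[OF norm_ge_zero bound[of 0 0]] .
  define F where "F n m = qmul (qpow q m) (c n m)" for n m
  have F_le: "norm (F n m) \<le> K * (\<sigma> ^ n * \<sigma> ^ m)" for n m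
  proof (cases "m < n")
    case False
    have "norm q ^ m = \<sigma> ^ m * \<sigma> ^ m"
      by (simp add: \<sigma>_def flip: power_mult_distrib)
    also have "\<dots> \<le> \<sigma> ^ n * \<sigma> ^ m"
      using False \<sigma> by (intro mult_right_mono power_decreasing) auto
    finally have "norm (c n m) * norm q ^ m \<le> K * (\<sigma> ^ n * \<sigma> ^ m)"
      using bound[of n m] K by (intro mult_mono) auto
    then show ?thesis
      by (simp add: F_def norm_qmul norm_qpow mult.commute)
  qed (use K \<sigma> lower in \<open>simp add: F_def\<close>)
  then have "norm (case x of (n, m) \<Rightarrow> F n m) \<le> K * (case x of (n, m) \<Rightarrow> \<sigma> ^ n * \<sigma> ^ m)" for x
    by (cases x) simp
  note double = suminf_swap_abs_summable[OF Infinite_Sum.abs_summable_on_comparison_test'[OF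
        summable_on_cmult_right[OF summable_on_geometric_product[OF \<sigma>]] this]]
  have column: "(\<Sum>n. F n m) = qmul (qpow q m) (\<Sum>n\<le>m. c n m)" for m
    by (subst suminf_finite[of "{..m}"]) (auto simp: F_def lower qmul_sum_right)
  show "summable (\<lambda>m. qmul (qpow q m) (\<Sum>n\<le>m. c n m))"
    using double(1) by (simp add: column)
  have "(\<Sum>n. ps (c n) q) = (\<Sum>n. \<Sum>m. F n m)"
    by (simp add: ps_def F_def)
  also have "\<dots> = ps (\<lambda>m. \<Sum>n\<le>m. c n m) q"
    unfolding double(2) by (simp add: column ps_def)
  finally show "(\<Sum>n. ps (c n) q) = ps (\<lambda>m. \<Sum>n\<le>m. c n m) q" .
qed

lemma real_powser_eq_0_imp_coeffs_eq_0:
  fixes u :: "nat \<Rightarrow> real"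
  assumes h: "\<And>t. \<bar>t\<bar> < 1 \<Longrightarrow> (\<lambda>n. u n * t ^ n) sums 0"
  shows "u k = 0"
proof (induct k rule: less_induct)
  case (less k)
  have "(\<lambda>n. u (n + k) * t ^ n) sums 0" if t0: "t \<noteq> 0" and t1: "norm t < 1" for t :: real
  proof -
    have "(\<lambda>n. u n * t ^ n) sums (0 + (\<Sum>i<k. u i * t ^ i))"
      using h[of t] t1 less by simp
    then have "(\<lambda>i. u (i + k) * t ^ (i + k)) sums 0"
      by (subst sums_iff_shift)
    then have "(\<lambda>i. u (i + k) * t ^ (i + k) * (1 / t ^ k)) sums (0 * (1 / t ^ k))"
      by (rule sums_mult2)
    then show ?thesis
      using t0 by (simp add: power_add)
  qed
  then have "((\<lambda>_::real. 0::real) \<longlongrightarrow> (\<lambda>n. u (n + k)) 0) (at (0::real))"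
    using powser_limit_0_strong[where s=1 and a="\<lambda>n. u (n + k)" and f="\<lambda>_. 0"] by auto
  then show ?case
    using LIM_const_eq by fastforce
qed

lemma ps_rep_unique:
  assumes "ps_rep g a" "ps_rep g a'"
  shows "a = a'"
proof
  fix n
  define e where "e n = a n - a' n" for n
  have e_sums: "(\<lambda>n. t ^ n *\<^sub>R e n) sums 0" if t: "\<bar>t\<bar> < 1" for t
  proof -
    define q where "q = (complex_of_real t, 0 :: complex)"
    have "q \<in> qball" using t by (simp add: q_def qball_iff norm_Pair)
    then have "(\<lambda>n. qmul (qpow q n) (c n)) sums g q" if "ps_rep g c" for c
      using that unfolding ps_rep_def ps_def by (metis summable_sums)
    from sums_diff[OF this[OF assms(1)] this[OF assms(2)]] show ?thesis
      by (simp only: q_def qpow_of_real qmul_of_real_left e_def scaleR_diff_right) simp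
  qed
  have "l (e n) = 0" if "bounded_linear l" for l :: "quat \<Rightarrow> real"
  proof (rule real_powser_eq_0_imp_coeffs_eq_0)
    fix t :: real assume "\<bar>t\<bar> < 1"
    from bounded_linear.sums[OF that e_sums[OF this]]
    show "(\<lambda>n. l (e n) * t ^ n) sums 0"
      using that by (simp add: linear_simps bounded_linear.linear mult.commute)
  qed
  then have "e n = 0"
    using euclidean_all_zero_iff bounded_linear_inner_left by blast
  then show "a n = a' n"
    by (simp add: e_def)
qed

lemma coeffs_eqI: "ps_rep g a \<Longrightarrow> coeffs g = a"
  unfolding coeffs_def by (rule some_equality) (auto intro: ps_rep_unique)

lemma ps_rep_coeffs: "regular_B g \<Longrightarrow> ps_rep g (coeffs g)"
  by (simp add: regular_B_def coeffs_def someI_ex)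

lemma ps_at_0: "ps b 0 = b 0"
proof -
  have "ps b 0 = (\<Sum>n\<in>{0}. qmul (qpow 0 n) (b n))"
    unfolding ps_def by (rule suminf_finite) (auto simp: qpow_zero)
  then show ?thesis by simp
qed

lemma self_map_coeffs_coeffs:
  assumes "regular_B \<phi>" and "\<forall>q\<in>qball. \<phi> q \<in> qball"
  shows "self_map_coeffs (coeffs \<phi>)"
  using ps_rep_coeffs[OF assms(1)] assms(2) by (auto simp: self_map_coeffs_def ps_rep_def qball_iff)

lemma coeffs_0: "regular_B g \<Longrightarrow> coeffs g 0 = g 0"
  using ps_rep_coeffs[of g] by (auto simp: ps_rep_def ps_at_0 qball_iff)

lemma ps_rep_Cop:
  assumes b: "self_map_coeffs (coeffs \<phi>)" and b0: "coeffs \<phi> 0 = 0"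
    and K: "\<And>n. norm (coeffs f n) \<le> K"
  shows "ps_rep (Cop \<phi> f) (Cop_coeffs (coeffs \<phi>) (coeffs f))"
proof -
  define c where "c n m = qmul (spow (coeffs \<phi>) n m) (coeffs f n)" for n m
  have "qmul (ps (spow (coeffs \<phi>) n) q) (coeffs f n) = ps (c n) q" if "q \<in> qball" for n q
  proof -
    have "summable (\<lambda>m. norm q ^ m)"
      using that by (intro summable_geometric) (simp add: qball_iff)
    then have "summable (\<lambda>m. qmul (qpow q m) (spow (coeffs \<phi>) n m))"
      by (rule summable_norm_cancel[OF summable_comparison_test'])
         (use norm_spow_le_1[OF b] in \<open>simp add: norm_qmul norm_qpow mult_left_le\<close>)
    then show ?thesis
      unfolding ps_def c_def by (simp add: bounded_linear.suminf[OF bounded_linear_qmul_left] qmul_assoc)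
  qed
  moreover have "ps_rep (\<lambda>q. \<Sum>n. ps (c n) q) (Cop_coeffs (coeffs \<phi>) (coeffs f))"
    unfolding Cop_coeffs_def c_def[symmetric]
  proof (rule ps_rep_suminf_triangular)
    show "norm (c n m) \<le> K" for n m
      using mult_mono[OF norm_spow_le_1[OF b, of n m] K[of n]] by (simp add: c_def norm_qmul)
    show "m < n \<Longrightarrow> c n m = 0" for n m
      by (simp add: c_def spow_eq_0_below[of "coeffs \<phi>", OF b0])
  qed
  ultimately show ?thesis
    by (simp add: ps_rep_def Cop_def)
qed

lemma ps_rep_Dop:
  assumes b: "self_map_coeffs (coeffs \<phi>)" and b0: "coeffs \<phi> 0 = 0"
    and K: "\<And>n. norm (coeffs f n) \<le> K"
  shows "ps_rep (Dop \<phi> f) (Dop_coeffs (coeffs \<phi>) (coeffs f))"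
  unfolding Dop_def[abs_def] Dop_coeffs_def
proof (rule ps_rep_suminf_triangular)
  show "norm (qmul (coeffs f n) (spow (coeffs \<phi>) n m)) \<le> K" for n m
    using mult_mono[OF K[of n] norm_spow_le_1[OF b, of n m]] order_trans[OF norm_ge_zero K[of n]]
    by (simp add: norm_qmul)
  show "m < n \<Longrightarrow> qmul (coeffs f n) (spow (coeffs \<phi>) n m) = 0" for n m
    by (simp add: spow_eq_0_below[of "coeffs \<phi>", OF b0])
qed

lemma norm_coeffs_le_H2norm:
  assumes "in_H2 f"
  shows "norm (coeffs f n) \<le> H2norm f"
proof -
  have "(\<Sum>i\<in>{n}. (norm (coeffs f i))\<^sup>2) \<le> (\<Sum>i. (norm (coeffs f i))\<^sup>2)"
    using assms by (intro sum_le_suminf) (auto simp: in_H2_def)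
  then show ?thesis
    by (simp add: H2norm_def real_le_rsqrt)
qed

lemma in_H2_H2norm_le:
  assumes f: "in_H2 f" and g: "ps_rep g c"
    and l2: "\<And>N. (\<Sum>m<N. (norm (c m))\<^sup>2) \<le> (\<Sum>n<N. (norm (coeffs f n))\<^sup>2)"
  shows "in_H2 g" and "H2norm g \<le> H2norm f"
proof -
  have summable_f: "summable (\<lambda>n. (norm (coeffs f n))\<^sup>2)"
    using f by (simp add: in_H2_def)
  have "(\<Sum>m<N. (norm (c m))\<^sup>2) \<le> (\<Sum>n. (norm (coeffs f n))\<^sup>2)" for N
    using l2[of N] sum_le_suminf[OF summable_f, of "{..<N}"] by simp
  moreover from this have summable_c: "summable (\<lambda>m. (norm (c m))\<^sup>2)"
    by (intro summableI_nonneg_bounded) auto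
  ultimately have "(\<Sum>m. (norm (c m))\<^sup>2) \<le> (\<Sum>n. (norm (coeffs f n))\<^sup>2)"
    by (intro suminf_le_const)
  then show "in_H2 g" and "H2norm g \<le> H2norm f"
    using coeffs_eqI[OF g] g summable_c by (auto simp: in_H2_def H2norm_def regular_B_def)
qed

lemma ps_unit_coeffs: "ps (\<lambda>n. if n = 0 then qone else 0) q = qone"
  unfolding ps_def by (subst suminf_finite[of "{0}"]) auto

lemma ps_rep_const_qone: "ps_rep (\<lambda>q. qone) (\<lambda>n. if n = 0 then qone else 0)"
proof -
  have "summable (\<lambda>n. qmul (qpow q n) (if n = 0 then qone else 0))" for q
    by (rule summable_finite[of "{0}"]) auto
  then show ?thesis
    by (simp add: ps_rep_def ps_unit_coeffs)
qed

lemmas coeffs_const_qone = coeffs_eqI[OF ps_rep_const_qone]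

lemma in_H2_const_qone: "in_H2 (\<lambda>q. qone)"
  and H2norm_const_qone: "H2norm (\<lambda>q. qone) = 1"
proof -
  have "(\<lambda>n. (norm (coeffs (\<lambda>q. qone) n))\<^sup>2) = (\<lambda>n. if n = 0 then 1 else 0)"
    by (simp add: coeffs_const_qone fun_eq_iff)
  moreover have "(\<lambda>n. if n = 0 then 1 else 0 :: real) sums 1"
    using sums_single[of 0 "\<lambda>_. 1 :: real"] by simp
  moreover have "regular_B (\<lambda>q. qone)"
    unfolding regular_B_def using ps_rep_const_qone by blast
  ultimately show "in_H2 (\<lambda>q. qone)" and "H2norm (\<lambda>q. qone) = 1"
    unfolding in_H2_def H2norm_def by (simp_all add: sums_iff)
qed

lemma Cop_const_qone: "Cop \<phi> (\<lambda>q. qone) = (\<lambda>q. qone)"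
proof
  fix q
  have "Cop \<phi> (\<lambda>q. qone) q = (\<Sum>n\<in>{0}. qmul (ps (spow (coeffs \<phi>) n) q) (coeffs (\<lambda>q. qone) n))"
    unfolding Cop_def by (rule suminf_finite) (auto simp: coeffs_const_qone)
  then show "Cop \<phi> (\<lambda>q. qone) q = qone"
    by (simp add: coeffs_const_qone ps_unit_coeffs)
qed

lemma Dop_const_qone: "Dop \<phi> (\<lambda>q. qone) = (\<lambda>q. qone)"
proof
  fix q
  have "Dop \<phi> (\<lambda>q. qone) q = (\<Sum>n\<in>{0}. ps (\<lambda>m. qmul (coeffs (\<lambda>q. qone) n) (spow (coeffs \<phi>) n m)) q)"
    unfolding Dop_def by (rule suminf_finite) (auto simp: coeffs_const_qone ps_def)
  then show "Dop \<phi> (\<lambda>q. qone) q = qone"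
    by (simp add: coeffs_const_qone ps_unit_coeffs)
qed

lemma opnorm_H2_eq_1:
  assumes contraction: "\<And>f. in_H2 f \<Longrightarrow> in_H2 (T f) \<and> H2norm (T f) \<le> H2norm f"
    and fixes_one: "T (\<lambda>q. qone) = (\<lambda>q. qone)"
  shows "bounded_H2 T" and "opnorm_H2 T = 1"
proof -
  show "bounded_H2 T"
    unfolding bounded_H2_def using contraction by (auto intro!: exI[of _ 1])
  show "opnorm_H2 T = 1"
    unfolding opnorm_H2_def
  proof (rule cSup_eq_maximum)
    show "1 \<in> {H2norm (T f) |f. in_H2 f \<and> H2norm f \<le> 1}"
      using in_H2_const_qone H2norm_const_qone fixes_one by (auto intro!: exI[of _ "\<lambda>q. qone"])
    show "x \<le> 1" if "x \<in> {H2norm (T f) |f. in_H2 f \<and> H2norm f \<le> 1}" for x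
      using that contraction by force
  qed
qed

theorem mainTheorem2:
  fixes \<phi> :: "quat \<Rightarrow> quat"
  assumes "regular_B \<phi>"
    and "\<forall>q\<in>qball. \<phi> q \<in> qball"
    and "\<phi> 0 = 0"
  shows "bounded_H2 (Cop \<phi>) \<and> bounded_H2 (Dop \<phi>)
         \<and> opnorm_H2 (Cop \<phi>) = 1 \<and> opnorm_H2 (Dop \<phi>) = 1"
proof -
  have b: "self_map_coeffs (coeffs \<phi>)"
    using assms(1,2) by (rule self_map_coeffs_coeffs)
  have b0: "coeffs \<phi> 0 = 0"
    using assms(1,3) by (simp add: coeffs_0)
  have C: "in_H2 (Cop \<phi> f) \<and> H2norm (Cop \<phi> f) \<le> H2norm f" if f: "in_H2 f" for f
    using in_H2_H2norm_le[OF f ps_rep_Cop[OF b b0 norm_coeffs_le_H2norm[OF f]] Cop_coeffs_l2_le[OF b b0]]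
    by blast
  have D: "in_H2 (Dop \<phi> f) \<and> H2norm (Dop \<phi> f) \<le> H2norm f" if f: "in_H2 f" for f
    using in_H2_H2norm_le[OF f ps_rep_Dop[OF b b0 norm_coeffs_le_H2norm[OF f]] Dop_coeffs_l2_le[OF b b0]]
    by blast
  show ?thesis
    using opnorm_H2_eq_1[OF C Cop_const_qone] opnorm_H2_eq_1[OF D Dop_const_qone] by blast
qed

end
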